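(* There is an absolute constant $a_2>0$ such that for all integers $k\ge 80$, $n\ge 2k$ and every positive integer $m\le\frac{\ln k}{4}$, $$\int_{[0,n]^m}\psi\Big(\max_{i\in[m]}x_i-\frac1k\Big)\,dx\le 1+\frac{a_2^m}{k},$$ where $\psi(\gamma)=1$ for $\gamma<1$, $\psi(\gamma)=\frac2k$ for $\gamma\in[1,50]$, and $\psi(\gamma)=4k\,e^{-\frac{\gamma}{20}\ln k}$ for $\gamma>50$. *)

theory Defs
  imports "HOL-Analysis.Analysis"
begin

definition psi :: "nat \<Rightarrow> real \<Rightarrow> real" where
  "psi k \<gamma> = (if \<gamma> < 1 then 1
               else if \<gamma> \<le> 50 then 2 / real k
               else 4 * real k * exp (- (\<gamma> / 20) * ln (real k)))"

end

theory Submission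
  imports Defs "HOL-Real_Asymp.Real_Asymp"
begin

text \<open>
  Bound \<open>\<psi>(max x\<^sub>i - 1/k)\<close> pointwise on the cube by one term per regime of \<open>\<psi>\<close>. Where
  \<open>\<psi> = 1\<close> all coordinates are at most \<open>1 + 1/k\<close>; where \<open>\<psi> = 2/k\<close> they are at most 51; and in the
  tail \<open>\<gamma> > 50\<close> the hypothesis \<open>m \<le> ln k / 4\<close> gives \<open>\<Sum>x\<^sub>i \<le> (\<gamma> + 1) ln k / 4\<close>, which turns
  \<open>\<psi>(\<gamma>) = 4k \<cdot> k\<^sup>-\<^sup>\<gamma>\<^sup>/\<^sup>2\<^sup>0\<close> into at most \<open>(4/k) exp(-\<Sum>x\<^sub>i / 250)\<close>, a product of one-dimensional
  densities. Integrating, the three terms contribute \<open>(1 + 1/k)\<^sup>m \<le> 1 + 2\<^sup>m/k\<close>, \<open>(2/k) 51\<^sup>m\<close> and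
  \<open>(4/k) 250\<^sup>m\<close>, so \<open>a\<^sub>2 = 3000\<close> works.
\<close>

definition cube :: "nat \<Rightarrow> real \<Rightarrow> (nat \<Rightarrow> real) set" where
  "cube m b = PiE {..<m} (\<lambda>_. {0..b})"

interpretation lborel_product: product_sigma_finite "\<lambda>_::nat. lborel :: real measure"
  by standard

lemma sets_cube [measurable]: "cube m b \<in> sets (PiM {..<m} (\<lambda>_. lborel))"
  unfolding cube_def by (intro sets_PiM_I_finite) auto

lemma emeasure_cube:
  assumes "0 \<le> b"
  shows "emeasure (PiM {..<m} (\<lambda>_. lborel)) (cube m b) = ennreal b ^ m"
  unfolding cube_def using assms by (subst lborel_product.emeasure_PiM) auto

lemma nn_integral_exp_neg_divide:
  assumes "0 < c"
  shows "(\<integral>\<^sup>+y. ennreal (exp (- y / c)) * indicator {0..} y \<partial>lborel) = ennreal c"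
proof -
  have "(\<integral>\<^sup>+y. ennreal (exp (- y / c)) * indicator {0..} y \<partial>lborel) = ennreal (0 - (- c * exp (- 0 / c)))"
  proof (rule nn_integral_FTC_atLeast)
    show "((\<lambda>y. - c * exp (- y / c)) \<longlongrightarrow> 0) at_top"
      using assms by real_asymp
  qed (use assms in \<open>auto intro!: derivative_eq_intros\<close>)
  then show ?thesis by simp
qed

lemma nn_integral_prod_exp_neg_divide:
  assumes "0 < c"
  shows "(\<integral>\<^sup>+x. (\<Prod>i<m. ennreal (exp (- x i / c)) * indicator {0..} (x i)) \<partial>PiM {..<m} (\<lambda>_. lborel))
         = ennreal c ^ m"
  using lborel_product.product_nn_integral_prod[of "{..<m}" "\<lambda>_ y. ennreal (exp (- y / c)) * indicator {0..} y"]
    nn_integral_exp_neg_divide[OF assms] by simp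

lemma one_plus_power_le:
  fixes x :: real
  assumes "0 \<le> x" "x \<le> 1"
  shows "(1 + x) ^ m \<le> 1 + x * (2 ^ m - 1)"
proof (induction m)
  case 0
  then show ?case by simp
next
  case (Suc m)
  have "x * x * (2 ^ m - 1) \<le> x * (2 ^ m - 1)"
    using assms by (intro mult_right_mono) (auto simp: mult_left_le)
  then have "(1 + x) * (1 + x * (2 ^ m - 1)) \<le> 1 + x * (2 ^ Suc m - 1)"
    by (simp add: algebra_simps)
  moreover have "(1 + x) * (1 + x) ^ m \<le> (1 + x) * (1 + x * (2 ^ m - 1))"
    using Suc assms by (intro mult_left_mono) auto
  ultimately show ?case by simp
qed

lemma mult_power_le_power_mult:
  fixes a c :: real
  assumes "1 \<le> c" "0 \<le> a" "1 \<le> m"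
  shows "c * a ^ m \<le> (c * a) ^ m"
proof -
  have "c \<le> c ^ m"
    using assms power_increasing[of 1 m c] by simp
  then have "c * a ^ m \<le> c ^ m * a ^ m"
    using assms by (intro mult_right_mono) auto
  then show ?thesis by (simp add: power_mult_distrib)
qed

lemma psi_tail_le:
  assumes k: "1 \<le> k" and \<gamma>: "50 < \<gamma>" and S: "S \<le> ln (real k) / 4 * (\<gamma> + 1)"
  shows "psi k \<gamma> \<le> 4 / real k * exp (- S / 250)"
proof -
  define L where "L = ln (real k)"
  have L: "0 \<le> L" and k_exp: "real k = exp L"
    using k by (simp_all add: L_def)
  have "L * (2001 - 49 * \<gamma>) \<le> 0"
    using \<gamma> L by (intro mult_nonneg_nonpos) auto
  then have "L - \<gamma> / 20 * L \<le> - L - S / 250"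
    using S unfolding L_def[symmetric] by (simp add: field_simps)
  then have "4 * exp (L - \<gamma> / 20 * L) \<le> 4 * exp (- L - S / 250)"
    by simp
  moreover have "psi k \<gamma> = 4 * exp (L - \<gamma> / 20 * L)"
  proof -
    have "exp (L - \<gamma> / 20 * L) = exp L * exp (- (\<gamma> / 20) * L)"
      by (simp add: exp_add[symmetric])
    then show ?thesis
      using \<gamma> by (simp add: psi_def k_exp)
  qed
  moreover have "exp (- L - S / 250) = exp (- L) * exp (- S / 250)"
    by (simp add: exp_add[symmetric])
  then have "4 * exp (- L - S / 250) = 4 / real k * exp (- S / 250)"
    by (simp add: k_exp exp_minus field_simps)
  ultimately show ?thesis by simp
qed

lemma psi_max_le:
  fixes x :: "nat \<Rightarrow> real"
  assumes k: "1 \<le> k" and m: "1 \<le> m" and mk: "real m \<le> ln (real k) / 4" and x: "x \<in> cube m b"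
  shows "psi k (Max (x ` {..<m}) - 1 / real k)
    \<le> indicator (cube m (1 + 1 / real k)) x + 2 / real k * indicator (cube m 51) x
      + 4 / real k * exp (- (\<Sum>i<m. x i) / 250)"
proof -
  define \<gamma> where "\<gamma> = Max (x ` {..<m}) - 1 / real k"
  have k_inv: "0 < 1 / real k" "1 / real k \<le> 1"
    using k by auto
  have x_le: "x i \<le> \<gamma> + 1 / real k" if "i < m" for i
    unfolding \<gamma>_def using that by simp
  have in_cube: "x \<in> cube m c" if "\<gamma> + 1 / real k \<le> c" for c
    using x x_le that by (force simp: cube_def PiE_iff)
  have nonneg: "0 \<le> (indicator A x :: real)" "0 \<le> 2 / real k * (indicator A x :: real)"
    "0 \<le> 4 / real k * exp (- (\<Sum>i<m. x i) / 250)" for A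
    using k_inv by auto
  consider "\<gamma> < 1" | "1 \<le> \<gamma>" "\<gamma> \<le> 50" | "50 < \<gamma>"
    by linarith
  then show ?thesis
  proof cases
    case 1
    then have "x \<in> cube m (1 + 1 / real k)"
      by (intro in_cube) simp
    with 1 nonneg show ?thesis
      by (simp add: psi_def \<gamma>_def[symmetric])
  next
    case 2
    then have "x \<in> cube m 51"
      using k_inv by (intro in_cube) linarith
    with 2 nonneg show ?thesis
      by (simp add: psi_def \<gamma>_def[symmetric])
  next
    case 3
    have "x i \<le> \<gamma> + 1" if "i < m" for i
      using x_le[OF that] k_inv by linarith
    then have "(\<Sum>i<m. x i) \<le> real m * (\<gamma> + 1)"
      using sum_bounded_above[of "{..<m}" x "\<gamma> + 1"] by simp
    also have "\<dots> \<le> ln (real k) / 4 * (\<gamma> + 1)"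
      using mk 3 by (intro mult_right_mono) auto
    finally have "psi k \<gamma> \<le> 4 / real k * exp (- (\<Sum>i<m. x i) / 250)"
      by (rule psi_tail_le[OF k 3])
    with nonneg(1)[of "cube m (1 + 1 / real k)"] nonneg(2)[of "cube m 51"] show ?thesis
      unfolding \<gamma>_def[symmetric] by linarith
  qed
qed

lemma nn_integral_psi_max_le:
  assumes k: "1 \<le> k" and m: "1 \<le> m" and mk: "real m \<le> ln (real k) / 4"
  shows "(\<integral>\<^sup>+ x. ennreal (psi k (Max (x ` {..<m}) - 1 / real k)) * indicator (cube m b) x
            \<partial>PiM {..<m} (\<lambda>_. lborel))
    \<le> ennreal ((1 + 1 / real k) ^ m + 2 / real k * 51 ^ m + 4 / real k * 250 ^ m)"
    (is "?I \<le> _")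
proof -
  let ?N = "PiM {..<m} (\<lambda>_. lborel :: real measure)"
  let ?w = "\<lambda>x. \<Prod>i<m. ennreal (exp (- x i / 250)) * indicator {0..} (x i)"
  have k_inv: "0 < 1 / real k"
    using k by auto
  have "?I \<le> (\<integral>\<^sup>+ x. indicator (cube m (1 + 1 / real k)) x + ennreal (2 / real k) * indicator (cube m 51) x
                  + ennreal (4 / real k) * ?w x \<partial>?N)"
  proof (rule nn_integral_mono)
    fix x :: "nat \<Rightarrow> real"
    show "ennreal (psi k (Max (x ` {..<m}) - 1 / real k)) * indicator (cube m b) x
      \<le> indicator (cube m (1 + 1 / real k)) x + ennreal (2 / real k) * indicator (cube m 51) x
        + ennreal (4 / real k) * ?w x"
    proof (cases "x \<in> cube m b")
      case True
      then have "?w x = (\<Prod>i<m. ennreal (exp (- x i / 250)))"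
        by (intro prod.cong) (auto simp: cube_def PiE_iff)
      also have "\<dots> = ennreal (exp (- (\<Sum>i<m. x i) / 250))"
        by (simp add: prod_ennreal exp_sum[symmetric] sum_negf sum_divide_distrib)
      finally show ?thesis
        using ennreal_leI[OF psi_max_le[OF k m mk True]] True k_inv
        by (simp add: ennreal_mult' ennreal_indicator del: times_divide_eq_left)
    qed simp
  qed
  also have "\<dots> = ennreal (1 + 1 / real k) ^ m + ennreal (2 / real k) * ennreal 51 ^ m
      + ennreal (4 / real k) * ennreal 250 ^ m"
    using k_inv
    by (simp add: nn_integral_add nn_integral_cmult emeasure_cube nn_integral_prod_exp_neg_divide[of 250, simplified])
  also have "\<dots> = ennreal ((1 + 1 / real k) ^ m + 2 / real k * 51 ^ m + 4 / real k * 250 ^ m)"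
    using k_inv by (simp add: ennreal_mult' ennreal_power[symmetric] del: times_divide_eq_left)
  finally show ?thesis .
qed

lemma cube_bounds_sum_le:
  assumes k: "1 \<le> k" and m: "1 \<le> m"
  shows "(1 + 1 / real k) ^ m + 2 / real k * 51 ^ m + 4 / real k * 250 ^ m \<le> 1 + 3000 ^ m / real k"
proof -
  have "(2::real) ^ m \<le> 1000 ^ m"
    by (intro power_mono) auto
  moreover have "2 * (51::real) ^ m \<le> 1000 ^ m"
  proof -
    have "2 * (51::real) ^ m \<le> 102 ^ m"
      using mult_power_le_power_mult[of 2 51 m] m by simp
    also have "\<dots> \<le> 1000 ^ m"
      by (intro power_mono) auto
    finally show ?thesis .
  qed
  moreover have "4 * (250::real) ^ m \<le> 1000 ^ m"
    using mult_power_le_power_mult[of 4 250 m] m by simp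
  moreover have "3 * (1000::real) ^ m \<le> 3000 ^ m"
    using mult_power_le_power_mult[of 3 1000 m] m by simp
  ultimately have "(2 ^ m + 2 * 51 ^ m + 4 * 250 ^ m) / real k \<le> (3000::real) ^ m / real k"
    by (intro divide_right_mono) auto
  moreover have "(1 + 1 / real k) ^ m \<le> 1 + 1 / real k * (2 ^ m - 1)"
    using k by (intro one_plus_power_le) auto
  moreover have "1 / real k * (2 ^ m - 1) + 2 / real k * 51 ^ m + 4 / real k * 250 ^ m
      \<le> (2 ^ m + 2 * 51 ^ m + 4 * 250 ^ m) / real k"
    using k by (simp add: field_simps)
  ultimately show ?thesis
    by linarith
qed

theorem mainTheorem15:
  shows "\<exists>a2::real. a2 > 0 \<and>
    (\<forall>k n m :: nat. k \<ge> 80 \<longrightarrow> n \<ge> 2 * k \<longrightarrow> m \<ge> 1 \<longrightarrow>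
       real m \<le> ln (real k) / 4 \<longrightarrow>
       (\<integral>\<^sup>+ x. ennreal (psi k (Max ((\<lambda>i. x i) ` {..<m}) - 1 / real k))
              * indicator (PiE {..<m} (\<lambda>_. {0..real n})) x
          \<partial>(PiM {..<m} (\<lambda>_. lborel)))
       \<le> ennreal (1 + a2 ^ m / real k))"
proof (intro exI[of _ 3000] conjI allI impI)
  fix k n m :: nat
  \<comment> \<open>The bound holds for every \<open>n\<close> and every \<open>k \<ge> 1\<close>.\<close>
  assume "80 \<le> k" "2 * k \<le> n" and m: "1 \<le> m" and mk: "real m \<le> ln (real k) / 4"
  then have k: "1 \<le> k"
    by simp
  show "(\<integral>\<^sup>+ x. ennreal (psi k (Max ((\<lambda>i. x i) ` {..<m}) - 1 / real k))
              * indicator (PiE {..<m} (\<lambda>_. {0..real n})) x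
          \<partial>(PiM {..<m} (\<lambda>_. lborel)))
       \<le> ennreal (1 + 3000 ^ m / real k)"
    using nn_integral_psi_max_le[OF k m mk, of "real n"] ennreal_leI[OF cube_bounds_sum_le[OF k m]]
    unfolding cube_def by (rule order_trans)
qed simp

end
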